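(* Let $D$ be a pre-divergence on a Polish space $\mathcal{X}$, $c$ a cost function, and $\mu\in\mathcal{P}(\mathcal{X})$. If $P\mapsto D(P\|\mu)$ is convex, then $P\mapsto D^c(P\|\mu)$ is convex.
   Context: $\mathcal{P}(\mathcal{X})$ is the set of Borel probability measures on the Polish space $\mathcal{X}$. A pre-divergence is $D:\mathcal{P}(\mathcal{X})\times\mathcal{P}(\mathcal{X})\to[0,\infty]$ with $D(\mu\|\mu)=0$ for all $\mu$. A cost function is a lower semicontinuous $c:\mathcal{X}\times\mathcal{X}\to[0,\infty]$, with OT cost $C(\mu,\nu)=\inf\{\int c\,d\pi:\pi\in\mathcal{P}(\mathcal{X}\times\mathcal{X}),\pi_1=\mu,\pi_2=\nu\}$. $D^c(\nu\|\mu)=\inf_{\eta\in\mathcal{P}(\mathcal{X})}\{D(\eta\|\mu)+C(\eta,\nu)\}$. *)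

theory Defs
  imports "HOL-Probability.Probability"
begin

definition Prob :: "'a::topological_space measure set" where
  "Prob = {M. sets M = sets borel \<and> prob_space M}"

definition pre_divergence :: "('a::topological_space measure \<Rightarrow> 'a measure \<Rightarrow> ennreal) \<Rightarrow> bool" where
  "pre_divergence D \<longleftrightarrow> (\<forall>\<mu>\<in>Prob. D \<mu> \<mu> = 0)"

text \<open>Cost function: lower semicontinuous c : X x X -> [0,oo] (closed sublevel sets).\<close>
definition cost_function :: "('a::topological_space \<Rightarrow> 'a \<Rightarrow> ennreal) \<Rightarrow> bool" where
  "cost_function c \<longleftrightarrow> (\<forall>y. closed {p :: 'a \<times> 'a. c (fst p) (snd p) \<le> y})"

definition couplings :: "'a::topological_space measure \<Rightarrow> 'a measure \<Rightarrow> ('a \<times> 'a) measure set" where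
  "couplings \<mu> \<nu> = {\<pi>. sets \<pi> = sets borel \<and> prob_space \<pi> \<and>
      distr \<pi> borel fst = \<mu> \<and> distr \<pi> borel snd = \<nu>}"

definition OT_cost :: "('a::topological_space \<Rightarrow> 'a \<Rightarrow> ennreal) \<Rightarrow> 'a measure \<Rightarrow> 'a measure \<Rightarrow> ennreal" where
  "OT_cost c \<mu> \<nu> = (INF \<pi>\<in>couplings \<mu> \<nu>. \<integral>\<^sup>+ p. c (fst p) (snd p) \<partial>\<pi>)"

definition Dc :: "('a::topological_space measure \<Rightarrow> 'a measure \<Rightarrow> ennreal) \<Rightarrow> ('a \<Rightarrow> 'a \<Rightarrow> ennreal)
    \<Rightarrow> 'a measure \<Rightarrow> 'a measure \<Rightarrow> ennreal" where
  "Dc D c \<nu> \<mu> = (INF \<eta>\<in>Prob. D \<eta> \<mu> + OT_cost c \<eta> \<nu>)"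

definition mix :: "real \<Rightarrow> 'a::topological_space measure \<Rightarrow> 'a measure \<Rightarrow> 'a measure" where
  "mix t P Q = measure_of (space borel) (sets borel)
      (\<lambda>A. ennreal t * emeasure P A + ennreal (1 - t) * emeasure Q A)"

definition convex_on_Prob :: "('a::topological_space measure \<Rightarrow> ennreal) \<Rightarrow> bool" where
  "convex_on_Prob F \<longleftrightarrow> (\<forall>P\<in>Prob. \<forall>Q\<in>Prob. \<forall>t\<in>{0..1::real}.
      F (mix t P Q) \<le> ennreal t * F P + ennreal (1 - t) * F Q)"

end

theory Submission
  imports Defs
begin

text \<open>
  \<open>D\<^sup>c(\<nu>\<parallel>\<mu>)\<close> is the infimum of \<open>D(\<eta>\<parallel>\<mu>) + \<integral>c d\<pi>\<close> over all pairs \<open>(\<eta>, \<pi>)\<close> in which \<open>\<pi>\<close>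
  couples \<open>\<eta>\<close> with \<open>\<nu>\<close>. Mixing a feasible pair for \<open>P\<close> with a feasible pair for \<open>Q\<close>
  (with the same weight \<open>t\<close> in both components) gives a feasible pair for \<open>t P + (1 - t) Q\<close>,
  because marginals commute with mixtures. Along this operation the objective is convex:
  \<open>D(\<cdot>\<parallel>\<mu>)\<close> by hypothesis and the transport term \<open>\<integral>c d\<pi>\<close> linearly. Taking infima over both
  pairs gives the convexity of \<open>D\<^sup>c(\<cdot>\<parallel>\<mu>)\<close>.
\<close>

lemma INF_add_left_ennreal: "c + (INF i\<in>I. f i) = (INF i\<in>I. c + f i :: ennreal)"
proof (cases "I = {}")
  case False
  have "continuous (at_right (Inf (f ` I))) (\<lambda>x::ennreal. c + x)"
    by (intro continuous_add continuous_const continuous_ident)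
  then show ?thesis
    using continuous_at_Inf_mono[of "\<lambda>x. c + x" "f ` I"] False
    by (auto simp: mono_def add_left_mono image_comp)
qed simp

lemma INF_mult_left_ennreal:
  assumes "c \<noteq> 0" "c \<noteq> top"
  shows "c * (INF i\<in>I. f i) = (INF i\<in>I. c * f i :: ennreal)"
proof (cases "I = {}")
  case False
  have "continuous_on UNIV (\<lambda>x::ennreal. c * x)"
    using ennreal_continuous_on_cmult[of c UNIV "\<lambda>x. x"] assms(2) by (simp add: top.not_eq_extremum)
  then have "continuous (at_right (Inf (f ` I))) (\<lambda>x::ennreal. c * x)"
    by (metis UNIV_I continuous_on_eq_continuous_within continuous_within_subset subset_UNIV)
  then show ?thesis
    using continuous_at_Inf_mono[of "\<lambda>x. c * x" "f ` I"] False
    by (auto simp: mono_def mult_left_mono image_comp)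
qed (use assms in \<open>simp add: ennreal_mult_top\<close>)

lemma le_mult_INF_add_mult_INF_ennreal:
  fixes f g :: "_ \<Rightarrow> ennreal"
  assumes "a \<noteq> 0" "a \<noteq> top" "b \<noteq> 0" "b \<noteq> top"
    and "\<And>i j. i \<in> I \<Longrightarrow> j \<in> J \<Longrightarrow> x \<le> a * f i + b * g j"
  shows "x \<le> a * (INF i\<in>I. f i) + b * (INF j\<in>J. g j)"
proof -
  have "x \<le> a * f i + b * (INF j\<in>J. g j)" if "i \<in> I" for i
    unfolding INF_mult_left_ennreal[OF assms(3,4)] INF_add_left_ennreal
    using assms(5) that by (auto intro!: INF_greatest)
  then have "x \<le> (INF i\<in>I. b * (INF j\<in>J. g j) + a * f i)"
    by (auto intro!: INF_greatest simp: add.commute)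
  then show ?thesis
    by (simp add: INF_mult_left_ennreal[OF assms(1,2)] INF_add_left_ennreal add.commute)
qed

lemma borel_measurable_cost_function:
  assumes "cost_function c"
  shows "(\<lambda>p. c (fst p) (snd p)) \<in> borel_measurable borel"
  using assms by (intro borel_measurableI_le) (simp add: cost_function_def)

lemma Dc_eq_INF_couplings:
  "Dc D c \<nu> \<mu> = (INF (\<eta>, \<pi>)\<in>(SIGMA \<eta>:Prob. couplings \<eta> \<nu>). D \<eta> \<mu> + (\<integral>\<^sup>+p. c (fst p) (snd p) \<partial>\<pi>))"
  by (simp add: Dc_def OT_cost_def INF_add_left_ennreal INF_Sigma split_beta)

lemma sets_mix [simp]: "sets (mix t P Q) = sets borel"
  using sets_measure_of[OF sets.space_closed[of borel]] sets.sigma_sets_eq[of borel]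
  by (simp add: mix_def)

lemma space_mix [simp]: "space (mix t P Q) = UNIV"
  using sets_eq_imp_space_eq[OF sets_mix[of t P Q]] by simp

lemma emeasure_mix:
  fixes P Q :: "'a::topological_space measure"
  assumes P: "sets P = sets borel" and Q: "sets Q = sets borel" and A: "A \<in> sets borel"
  shows "emeasure (mix t P Q) A = ennreal t * emeasure P A + ennreal (1 - t) * emeasure Q A"
  unfolding mix_def
proof (rule emeasure_measure_of_sigma[OF sets.sigma_algebra_axioms _ _ A])
  show "positive (sets borel) (\<lambda>A. ennreal t * emeasure P A + ennreal (1 - t) * emeasure Q A)"
    by (simp add: positive_def)
  show "countably_additive (sets borel) (\<lambda>A. ennreal t * emeasure P A + ennreal (1 - t) * emeasure Q A)"
    unfolding countably_additive_def
  proof (intro allI impI)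
    fix B :: "nat \<Rightarrow> 'a set"
    assume B: "range B \<subseteq> sets borel" "disjoint_family B"
    have "(\<Sum>i. ennreal t * emeasure P (B i) + ennreal (1 - t) * emeasure Q (B i))
        = ennreal t * (\<Sum>i. emeasure P (B i)) + ennreal (1 - t) * (\<Sum>i. emeasure Q (B i))"
      by (simp add: suminf_add[symmetric] ennreal_suminf_cmult)
    also have "\<dots> = ennreal t * emeasure P (\<Union> (range B)) + ennreal (1 - t) * emeasure Q (\<Union> (range B))"
      using B P Q by (simp add: suminf_emeasure)
    finally show "(\<Sum>i. ennreal t * emeasure P (B i) + ennreal (1 - t) * emeasure Q (B i))
        = ennreal t * emeasure P (\<Union> (range B)) + ennreal (1 - t) * emeasure Q (\<Union> (range B))" .
  qed
qed

lemma mix_0: "sets Q = sets borel \<Longrightarrow> mix 0 P Q = Q"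
  using sets_eq_imp_space_eq[of Q borel] measure_of_of_measure[of Q] by (simp add: mix_def)

lemma mix_1: "sets P = sets borel \<Longrightarrow> mix 1 P Q = P"
  using sets_eq_imp_space_eq[of P borel] measure_of_of_measure[of P] by (simp add: mix_def)

lemma prob_space_mix:
  assumes "sets P = sets borel" "prob_space P" "sets Q = sets borel" "prob_space Q"
    and "t \<in> {0..1}"
  shows "prob_space (mix t P Q)"
proof (rule prob_spaceI)
  have "space P = UNIV" "space Q = UNIV"
    using sets_eq_imp_space_eq[OF assms(1)] sets_eq_imp_space_eq[OF assms(3)] by simp_all
  then have "emeasure (mix t P Q) UNIV = ennreal t + ennreal (1 - t)"
    using assms emeasure_mix[of P Q UNIV t]
      prob_space.emeasure_space_1[OF assms(2)] prob_space.emeasure_space_1[OF assms(4)] by simp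
  also have "\<dots> = 1"
    using assms(5) by (simp flip: ennreal_plus)
  finally show "emeasure (mix t P Q) (space (mix t P Q)) = 1" by simp
qed

lemma Prob_mix: "P \<in> Prob \<Longrightarrow> Q \<in> Prob \<Longrightarrow> t \<in> {0..1} \<Longrightarrow> mix t P Q \<in> Prob"
  by (simp add: Prob_def prob_space_mix)

lemma nn_integral_mix:
  fixes P Q :: "'a::topological_space measure"
  assumes P: "sets P = sets borel" and Q: "sets Q = sets borel"
    and f: "f \<in> borel_measurable borel"
  shows "(\<integral>\<^sup>+x. f x \<partial>mix t P Q) = ennreal t * (\<integral>\<^sup>+x. f x \<partial>P) + ennreal (1 - t) * (\<integral>\<^sup>+x. f x \<partial>Q)"
proof -
  have meas: "borel_measurable P = borel_measurable borel" "borel_measurable Q = borel_measurable borel"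
    "borel_measurable (mix t P Q) = borel_measurable borel"
    by (rule measurable_cong_sets; simp add: P Q)+
  have space: "space P = UNIV" "space Q = UNIV"
    using sets_eq_imp_space_eq[OF P] sets_eq_imp_space_eq[OF Q] by simp_all
  from f show ?thesis
  proof (induction rule: borel_measurable_induct)
    case (cong f g)
    then show ?case
      using space by (simp add: fun_eq_iff)
  next
    case (set A)
    then show ?case
      using P Q by (simp add: emeasure_mix)
  next
    case (mult u c)
    then show ?case
      by (simp add: meas nn_integral_cmult distrib_left ac_simps)
  next
    case (add u v)
    then show ?case
      by (simp add: meas nn_integral_add distrib_left ac_simps)
  next
    case (seq U)
    have mono: "incseq (\<lambda>i. a * (\<integral>\<^sup>+x. U i x \<partial>M))" for a and M :: "'a measure"
      using \<open>incseq U\<close> by (auto simp: incseq_def le_fun_def intro!: mult_left_mono nn_integral_mono)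
    have SUP_integral: "(\<integral>\<^sup>+x. (SUP i. U i) x \<partial>M) = (SUP i. \<integral>\<^sup>+x. U i x \<partial>M)"
      if "sets M = sets borel" for M
    proof -
      have "U i \<in> borel_measurable M" for i
        using seq.hyps(1) by (simp cong: measurable_cong_sets[OF that refl])
      from nn_integral_monotone_convergence_SUP[OF \<open>incseq U\<close> this] show ?thesis
        by (simp add: SUP_apply image_comp)
    qed
    have "(SUP i. \<integral>\<^sup>+x. U i x \<partial>mix t P Q)
        = (SUP i. ennreal t * (\<integral>\<^sup>+x. U i x \<partial>P) + ennreal (1 - t) * (\<integral>\<^sup>+x. U i x \<partial>Q))"
      using seq.IH by simp
    also have "\<dots> = ennreal t * (SUP i. \<integral>\<^sup>+x. U i x \<partial>P) + ennreal (1 - t) * (SUP i. \<integral>\<^sup>+x. U i x \<partial>Q)"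
      by (simp add: ennreal_SUP_add[OF mono mono] SUP_mult_left_ennreal)
    finally show ?case
      by (simp only: SUP_integral[OF sets_mix] SUP_integral[OF P] SUP_integral[OF Q])
  qed
qed

lemma distr_mix:
  fixes P Q :: "'a::topological_space measure" and g :: "'a \<Rightarrow> 'b::topological_space"
  assumes P: "sets P = sets borel" and Q: "sets Q = sets borel" and g: "g \<in> borel_measurable borel"
  shows "distr (mix t P Q) borel g = mix t (distr P borel g) (distr Q borel g)"
proof (rule measure_eqI)
  fix A assume "A \<in> sets (distr (mix t P Q) borel g)"
  then have A: "A \<in> sets borel" by simp
  have "g \<in> borel_measurable (mix t P Q)" "g \<in> borel_measurable P" "g \<in> borel_measurable Q"
    using g P Q by (simp_all cong: measurable_cong_sets)
  moreover have "space P = UNIV" "space Q = UNIV"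
    using sets_eq_imp_space_eq[OF P] sets_eq_imp_space_eq[OF Q] by simp_all
  ultimately show "emeasure (distr (mix t P Q) borel g) A = emeasure (mix t (distr P borel g) (distr Q borel g)) A"
    using A P Q measurable_sets[OF g A] by (simp add: emeasure_distr emeasure_mix)
qed simp

lemma couplings_mix:
  assumes "\<pi>\<^sub>1 \<in> couplings \<eta>\<^sub>1 P" "\<pi>\<^sub>2 \<in> couplings \<eta>\<^sub>2 Q" "t \<in> {0..1}"
  shows "mix t \<pi>\<^sub>1 \<pi>\<^sub>2 \<in> couplings (mix t \<eta>\<^sub>1 \<eta>\<^sub>2) (mix t P Q)"
proof -
  have "fst \<in> borel_measurable (borel :: ('a \<times> 'a) measure)"
    "snd \<in> borel_measurable (borel :: ('a \<times> 'a) measure)"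
    by (intro borel_measurable_continuous_onI continuous_on_fst continuous_on_snd continuous_on_id)+
  then show ?thesis
    using assms by (auto simp: couplings_def prob_space_mix distr_mix)
qed

lemma Dc_mix_le:
  assumes convex: "convex_on_Prob (\<lambda>P. D P \<mu>)" and cost: "cost_function c" and t: "t \<in> {0..1}"
    and \<eta>\<^sub>1: "\<eta>\<^sub>1 \<in> Prob" and \<pi>\<^sub>1: "\<pi>\<^sub>1 \<in> couplings \<eta>\<^sub>1 P"
    and \<eta>\<^sub>2: "\<eta>\<^sub>2 \<in> Prob" and \<pi>\<^sub>2: "\<pi>\<^sub>2 \<in> couplings \<eta>\<^sub>2 Q"
  shows "Dc D c (mix t P Q) \<mu> \<le>
    ennreal t * (D \<eta>\<^sub>1 \<mu> + (\<integral>\<^sup>+p. c (fst p) (snd p) \<partial>\<pi>\<^sub>1)) +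
    ennreal (1 - t) * (D \<eta>\<^sub>2 \<mu> + (\<integral>\<^sup>+p. c (fst p) (snd p) \<partial>\<pi>\<^sub>2))"
proof -
  let ?C = "\<lambda>p. c (fst p) (snd p)"
  have "Dc D c (mix t P Q) \<mu> \<le> D (mix t \<eta>\<^sub>1 \<eta>\<^sub>2) \<mu> + (\<integral>\<^sup>+p. ?C p \<partial>mix t \<pi>\<^sub>1 \<pi>\<^sub>2)"
    unfolding Dc_eq_INF_couplings
    by (rule INF_lower2[of "(mix t \<eta>\<^sub>1 \<eta>\<^sub>2, mix t \<pi>\<^sub>1 \<pi>\<^sub>2)"])
      (use Prob_mix[OF \<eta>\<^sub>1 \<eta>\<^sub>2 t] couplings_mix[OF \<pi>\<^sub>1 \<pi>\<^sub>2 t] in auto)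
  also have "D (mix t \<eta>\<^sub>1 \<eta>\<^sub>2) \<mu> \<le> ennreal t * D \<eta>\<^sub>1 \<mu> + ennreal (1 - t) * D \<eta>\<^sub>2 \<mu>"
    using convex \<eta>\<^sub>1 \<eta>\<^sub>2 t by (simp add: convex_on_Prob_def)
  also have "(\<integral>\<^sup>+p. ?C p \<partial>mix t \<pi>\<^sub>1 \<pi>\<^sub>2) = ennreal t * (\<integral>\<^sup>+p. ?C p \<partial>\<pi>\<^sub>1) + ennreal (1 - t) * (\<integral>\<^sup>+p. ?C p \<partial>\<pi>\<^sub>2)"
    using \<pi>\<^sub>1 \<pi>\<^sub>2 borel_measurable_cost_function[OF cost]
    by (intro nn_integral_mix) (auto simp: couplings_def)
  finally show ?thesis
    by (simp add: add_mono distrib_left ac_simps)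
qed

theorem lemma1:
  fixes D :: "'a::polish_space measure \<Rightarrow> 'a measure \<Rightarrow> ennreal"
    and c :: "'a \<Rightarrow> 'a \<Rightarrow> ennreal"
    and \<mu> :: "'a measure"
  assumes "pre_divergence D"
    and "cost_function c"
    and "\<mu> \<in> Prob"
    and "convex_on_Prob (\<lambda>P. D P \<mu>)"
  shows "convex_on_Prob (\<lambda>P. Dc D c P \<mu>)"
  unfolding convex_on_Prob_def
proof (intro ballI)
  fix P Q :: "'a measure" and t :: real
  assume P: "P \<in> Prob" and Q: "Q \<in> Prob" and t: "t \<in> {0..1}"
  consider "t = 0" | "t = 1" | "0 < t" "t < 1"
    using t by fastforce
  then show "Dc D c (mix t P Q) \<mu> \<le> ennreal t * Dc D c P \<mu> + ennreal (1 - t) * Dc D c Q \<mu>"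
  proof cases
    case 3
    then show ?thesis
      unfolding Dc_eq_INF_couplings[of D c P] Dc_eq_INF_couplings[of D c Q]
      by (intro le_mult_INF_add_mult_INF_ennreal) (auto intro!: Dc_mix_le assms(2,4) t)
  qed (use P Q in \<open>simp_all add: Prob_def mix_0 mix_1\<close>)
qed

end
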